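(* Let $G$ be a block graph whose blocks are the cliques $K_{n_1},\dots,K_{n_r}$. Then $G$ admits a weak IASI and its sparing number is $\varphi(G)=\frac{1}{2}\sum_{i=1}^r (n_i-1)(n_i-2)$.
   Context: A block graph (clique tree) is a connected graph in which every block (maximal 2-connected subgraph or bridge) is a clique; here $r$ is the number of these cliques and $n_i$ the order of the $i$-th one. Let $\mathbb{N}_0$ be the set of non-negative integers; for $A,B\subseteq\mathbb{N}_0$, $A+B=\{a+b:a\in A,b\in B\}$. An integer additive set-indexer (IASI) of a graph $G$ is an injective map $f:V(G)\to\mathcal{P}(\mathbb{N}_0)$ such that $f^+:E(G)\to\mathcal{P}(\mathbb{N}_0)$, $f^+(uv)=f(u)+f(v)$, is injective. A weak IASI is an IASI with $|f^+(uv)|=\max(|f(u)|,|f(v)|)$ for every edge $uv$. An edge $e$ is mono-indexed if $|f^+(e)|=1$. The sparing number $\varphi(G)$ is the minimum number of mono-indexed edges over all weak IASIs of $G$. *)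

theory Defs
  imports Complex_Main
begin

definition graph :: "'a set \<Rightarrow> 'a set set \<Rightarrow> bool" where
  "graph V E \<longleftrightarrow> finite V \<and> (\<forall>e\<in>E. \<exists>u v. e = {u, v} \<and> u \<noteq> v \<and> u \<in> V \<and> v \<in> V)"

definition connected_on :: "'a set set \<Rightarrow> 'a set \<Rightarrow> bool" where
  "connected_on E W \<longleftrightarrow> W \<noteq> {} \<and>
     (\<forall>u\<in>W. \<forall>v\<in>W. (\<lambda>x y. x \<in> W \<and> y \<in> W \<and> {x, y} \<in> E)\<^sup>*\<^sup>* u v)"

text \<open>Induced subgraph on W (with at least 2 vertices) is connected and has no cut vertex.
  With 2 vertices this is a single edge (a bridge, if maximal); with at least 3 vertices
  it is 2-connectedness.\<close>
definition nonseparable :: "'a set set \<Rightarrow> 'a set \<Rightarrow> bool" where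
  "nonseparable E W \<longleftrightarrow> 2 \<le> card W \<and> connected_on E W \<and> (\<forall>v\<in>W. connected_on E (W - {v}))"

definition is_block :: "'a set \<Rightarrow> 'a set set \<Rightarrow> 'a set \<Rightarrow> bool" where
  "is_block V E W \<longleftrightarrow> W \<subseteq> V \<and> nonseparable E W \<and>
     (\<forall>W'. W \<subseteq> W' \<and> W' \<subseteq> V \<and> nonseparable E W' \<longrightarrow> W' = W)"

definition blocks :: "'a set \<Rightarrow> 'a set set \<Rightarrow> 'a set set" where
  "blocks V E = {W. is_block V E W}"

definition is_clique :: "'a set set \<Rightarrow> 'a set \<Rightarrow> bool" where
  "is_clique E W \<longleftrightarrow> (\<forall>u\<in>W. \<forall>v\<in>W. u \<noteq> v \<longrightarrow> {u, v} \<in> E)"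

definition block_graph :: "'a set \<Rightarrow> 'a set set \<Rightarrow> bool" where
  "block_graph V E \<longleftrightarrow> graph V E \<and> connected_on E V \<and> (\<forall>W\<in>blocks V E. is_clique E W)"

definition sumset :: "nat set \<Rightarrow> nat set \<Rightarrow> nat set" where
  "sumset A B = {a + b | a b. a \<in> A \<and> b \<in> B}"

definition iasi :: "'a set \<Rightarrow> 'a set set \<Rightarrow> ('a \<Rightarrow> nat set) \<Rightarrow> bool" where
  "iasi V E f \<longleftrightarrow> inj_on f V \<and> (\<forall>v\<in>V. finite (f v)) \<and>
     (\<forall>u v x y. {u, v} \<in> E \<longrightarrow> {x, y} \<in> E \<longrightarrow>
        sumset (f u) (f v) = sumset (f x) (f y) \<longrightarrow> {u, v} = {x, y})"

definition weak_iasi :: "'a set \<Rightarrow> 'a set set \<Rightarrow> ('a \<Rightarrow> nat set) \<Rightarrow> bool" where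
  "weak_iasi V E f \<longleftrightarrow> iasi V E f \<and>
     (\<forall>u v. {u, v} \<in> E \<longrightarrow> card (sumset (f u) (f v)) = max (card (f u)) (card (f v)))"

definition mono_indexed_edges :: "'a set set \<Rightarrow> ('a \<Rightarrow> nat set) \<Rightarrow> 'a set set" where
  "mono_indexed_edges E f = {e \<in> E. \<exists>u v. e = {u, v} \<and> card (sumset (f u) (f v)) = 1}"

definition sparing_number :: "'a set \<Rightarrow> 'a set set \<Rightarrow> nat" where
  "sparing_number V E = (LEAST k. \<exists>f. weak_iasi V E f \<and> card (mono_indexed_edges E f) = k)"

end

theory Submission
  imports Defs
begin

text \<open>Since \<open>|A + B| \<ge> |A| + |B| - 1\<close> for finite nonempty \<open>A, B \<subseteq> \<nat>\<close>, a weak IASI gives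
  a singleton label to at least one end of every edge. Hence a block \<open>K\<^sub>n\<close> contains at least
  \<open>n - 1\<close> singleton-labelled vertices and so at least \<open>(n - 1 choose 2)\<close> mono-indexed edges;
  two blocks share at most one vertex, so these edge sets are disjoint.

  Conversely, a block graph has an independent set \<open>I\<close> meeting every block: remove a non-cut
  vertex \<open>v\<close>, whose closed neighbourhood is the only maximal clique through \<open>v\<close>, and either
  keep the independent set of the rest or add \<open>v\<close> to it. With \<open>g\<close> injective, label \<open>v \<in> I\<close>
  by \<open>{2^g v, 2^(g v + 1)}\<close> and every other \<open>v\<close> by \<open>{2^g v}\<close>. The minimum \<open>2^g u + 2^g v\<close> of
  an edge label determines the edge, so this is a weak IASI, and its mono-indexed edges are the
  edges missing \<open>I\<close>: at most \<open>(n - 1 choose 2)\<close> in each block \<open>K\<^sub>n\<close>.\<close>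

section \<open>Connectivity inside a vertex set\<close>

definition reach :: "'a set set \<Rightarrow> 'a set \<Rightarrow> 'a \<Rightarrow> 'a \<Rightarrow> bool" where
  "reach E A = (\<lambda>x y. x \<in> A \<and> y \<in> A \<and> {x, y} \<in> E)\<^sup>*\<^sup>*"

definition component :: "'a set set \<Rightarrow> 'a set \<Rightarrow> 'a \<Rightarrow> 'a set" where
  "component E A s = {z \<in> A. reach E A s z}"

lemma connected_on_iff_reach:
  "connected_on E W \<longleftrightarrow> W \<noteq> {} \<and> (\<forall>u\<in>W. \<forall>v\<in>W. reach E W u v)"
  unfolding connected_on_def reach_def by simp

lemma reach_refl [simp]: "reach E A x x"
  unfolding reach_def by simp

lemma reach_edge: "x \<in> A \<Longrightarrow> y \<in> A \<Longrightarrow> {x, y} \<in> E \<Longrightarrow> reach E A x y"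
  unfolding reach_def by (rule r_into_rtranclp) simp

lemma reach_trans: "reach E A x y \<Longrightarrow> reach E A y z \<Longrightarrow> reach E A x z"
  unfolding reach_def by (rule rtranclp_trans)

lemma reach_step: "reach E A x y \<Longrightarrow> y \<in> A \<Longrightarrow> z \<in> A \<Longrightarrow> {y, z} \<in> E \<Longrightarrow> reach E A x z"
  using reach_trans reach_edge by metis

lemma reach_sym: "reach E A x y \<Longrightarrow> reach E A y x"
  unfolding reach_def by (rule sympD[OF symp_rtranclp]) (auto intro: sympI simp: insert_commute)

lemma reach_mono: "reach E A x y \<Longrightarrow> A \<subseteq> B \<Longrightarrow> reach E B x y"
  unfolding reach_def by (erule rtranclp_mono[THEN predicate2D, rotated]) auto

lemma connected_onI_center:
  assumes "c \<in> W" and "\<And>u. u \<in> W \<Longrightarrow> reach E W u c"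
  shows "connected_on E W"
proof -
  have "reach E W u v" if "u \<in> W" "v \<in> W" for u v
    using assms(2)[OF that(1)] reach_sym[OF assms(2)[OF that(2)]] by (rule reach_trans)
  then show ?thesis using assms(1) unfolding connected_on_iff_reach by blast
qed

lemma reach_component: "reach E A s t \<Longrightarrow> reach E (component E A s) s t"
  unfolding reach_def
proof (induction rule: rtranclp_induct)
  case (step y z)
  then have "y \<in> component E A s" "z \<in> component E A s"
    by (auto simp: component_def reach_def intro: rtranclp.rtrancl_into_rtrancl)
  with step show ?case by (auto intro: rtranclp.rtrancl_into_rtrancl)
qed simp

lemma connected_on_component:
  assumes "s \<in> A"
  shows "connected_on E (component E A s)"
proof (rule connected_onI_center[of s])
  show "s \<in> component E A s" using assms by (simp add: component_def)
  show "reach E (component E A s) u s" if "u \<in> component E A s" for u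
    using that reach_component[of E A s u] reach_sym by (auto simp: component_def)
qed

lemma reach_closed:
  assumes "reach E A s t" and "s \<in> C"
    and "\<And>c z. c \<in> C \<Longrightarrow> z \<in> A \<Longrightarrow> {c, z} \<in> E \<Longrightarrow> z \<in> C"
  shows "t \<in> C"
  using assms(1) unfolding reach_def
proof (induction rule: rtranclp_induct)
  case (step y z)
  then show ?case using assms(3) by blast
qed (rule assms(2))

text \<open>Cut the walk at its first visit of \<open>w\<close>: before that it cannot have entered \<open>K\<close>.\<close>

lemma reach_avoid:
  assumes "reach E A s w" and "s \<in> A - K" and "w \<notin> K"
    and attach: "\<And>k u. k \<in> K \<Longrightarrow> u \<in> A \<Longrightarrow> {k, u} \<in> E \<Longrightarrow> u \<in> K \<or> u = w"
  shows "reach E (A - K) s w"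
proof -
  have "(t \<notin> K \<and> reach E (A - K) s t) \<or> reach E (A - K) s w" if "reach E A s t" for t
    using that[unfolded reach_def]
  proof (induction rule: rtranclp_induct)
    case (step y z)
    show ?case
    proof (cases "reach E (A - K) s w")
      case False
      with step.IH have y: "y \<notin> K" "reach E (A - K) s y" by auto
      have "z \<notin> K"
        using attach[of z y] step.hyps(2) y False by (auto simp: insert_commute)
      with step.hyps(2) y show ?thesis by (auto intro: reach_step)
    qed simp
  qed (use assms(2) in simp)
  then show ?thesis using assms(1,3) by blast
qed

lemma connected_on_Un:
  assumes "connected_on E A" and "connected_on E B" and "c \<in> A \<inter> B"
  shows "connected_on E (A \<union> B)"
proof (rule connected_onI_center[of c])
  fix u assume "u \<in> A \<union> B"
  then have "reach E A u c \<or> reach E B u c"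
    using assms unfolding connected_on_iff_reach by blast
  then show "reach E (A \<union> B) u c"
    using reach_mono[of E A u c "A \<union> B"] reach_mono[of E B u c "A \<union> B"] by blast
qed (use assms(3) in blast)

lemma connected_on_clique:
  assumes "is_clique E K" and "c \<in> K"
  shows "connected_on E K"
proof (rule connected_onI_center[OF assms(2)])
  show "reach E K u c" if "u \<in> K" for u
    using assms that reach_edge[of u K c E] by (cases "u = c") (auto simp: is_clique_def)
qed

lemma Diff_singleton_nonempty_if_card_ge_2:
  assumes "2 \<le> card A"
  shows "A - {v} \<noteq> {}"
proof
  assume "A - {v} = {}"
  then have "card A \<le> card {v}" by (intro card_mono) auto
  with assms show False by simp
qed

lemma component_Diff_has_neighbour:
  assumes conn: "connected_on E V" and "r \<in> V" and "v \<in> V" and "r \<noteq> v"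
  obtains c where "c \<in> component E (V - {v}) r" and "{c, v} \<in> E"
proof -
  let ?C = "component E (V - {v}) r"
  have r_C: "r \<in> ?C" using assms by (auto simp: component_def)
  have "\<exists>c\<in>?C. {c, v} \<in> E"
  proof (rule ccontr)
    assume no_edge: "\<not> ?thesis"
    have "reach E V r v" using conn \<open>r \<in> V\<close> \<open>v \<in> V\<close> unfolding connected_on_iff_reach by blast
    then have "v \<in> ?C"
    proof (rule reach_closed[OF _ r_C])
      fix c z assume cz: "c \<in> ?C" "z \<in> V" "{c, z} \<in> E"
      have "z \<noteq> v" using no_edge cz by blast
      moreover have "c \<in> V - {v}" "reach E (V - {v}) r c"
        using cz(1) by (simp_all add: component_def)
      ultimately have "reach E (V - {v}) r z" using cz reach_step[of E "V - {v}" r c z] by blast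
      then show "z \<in> ?C" using cz \<open>z \<noteq> v\<close> by (simp add: component_def)
    qed
    then show False by (simp add: component_def)
  qed
  then show thesis using that by blast
qed

lemma component_Diff_psubset:
  assumes conn: "connected_on E V" and "r \<in> V" and v: "v \<in> V - {r}"
    and y: "y \<in> V - {v}" "y \<notin> component E (V - {v}) r"
  shows "component E (V - {v}) r \<subset> component E (V - {y}) r"
proof -
  let ?Cv = "component E (V - {v}) r" and ?Cy = "component E (V - {y}) r"
  obtain c where c: "c \<in> ?Cv" "{c, v} \<in> E"
    using component_Diff_has_neighbour[OF conn \<open>r \<in> V\<close>] v by blast
  have Cv_sub: "?Cv \<subseteq> V - {y}" using y by (auto simp: component_def)
  have "?Cv \<subseteq> ?Cy"
  proof
    fix z assume z: "z \<in> ?Cv"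
    then have "reach E (V - {v}) r z" by (simp add: component_def)
    then have "reach E ?Cv r z" by (rule reach_component)
    then have "reach E (V - {y}) r z" using Cv_sub by (rule reach_mono)
    then show "z \<in> ?Cy" using z Cv_sub by (auto simp: component_def)
  qed
  moreover have "v \<in> ?Cy"
  proof -
    have "c \<in> ?Cy" using \<open>?Cv \<subseteq> ?Cy\<close> c(1) by blast
    then have "reach E (V - {y}) r c" by (simp add: component_def)
    moreover have "c \<in> V - {y}" "v \<in> V - {y}" using c(1) Cv_sub v y by auto
    ultimately have "reach E (V - {y}) r v" using c(2) reach_step[of E "V - {y}" r c v] by blast
    then show ?thesis using \<open>v \<in> V - {y}\<close> by (simp add: component_def)
  qed
  moreover have "v \<notin> ?Cv" by (simp add: component_def)
  ultimately show ?thesis by blast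
qed

text \<open>Take \<open>v \<noteq> r\<close> whose removal leaves \<open>r\<close> a \<open>\<subseteq>\<close>-maximal component: by the previous
  lemma, no vertex is then cut off from \<open>r\<close>.\<close>

lemma ex_non_cut_vertex:
  assumes "finite V" and conn: "connected_on E V" and "2 \<le> card V"
  obtains v where "v \<in> V" and "connected_on E (V - {v})"
proof -
  obtain r where r: "r \<in> V" using conn unfolding connected_on_def by blast
  define C where "C v = component E (V - {v}) r" for v
  obtain v0 where "v0 \<in> V - {r}"
    using Diff_singleton_nonempty_if_card_ge_2[OF assms(3)] by blast
  then have "finite (C ` (V - {r}))" and "C ` (V - {r}) \<noteq> {}"
    using assms(1) by auto
  then obtain m where "m \<in> C ` (V - {r})" and m_max: "\<forall>b\<in>C ` (V - {r}). m \<subseteq> b \<longrightarrow> m = b"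
    using finite_has_maximal[of "C ` (V - {r})"] by meson
  then obtain v where v: "v \<in> V - {r}" and "m = C v" by blast
  with m_max have v_max: "\<forall>u\<in>V - {r}. C v \<subseteq> C u \<longrightarrow> C v = C u"
    by simp
  have "C v = V - {v}"
  proof (rule ccontr)
    assume "C v \<noteq> V - {v}"
    then obtain y where y: "y \<in> V - {v}" "y \<notin> C v"
      by (auto simp: C_def component_def)
    then have "C v \<subset> C y"
      unfolding C_def by (rule component_Diff_psubset[OF conn r v])
    moreover have "y \<in> V - {r}"
      using y r v by (auto simp: C_def component_def)
    ultimately show False using v_max by blast
  qed
  moreover have "connected_on E (C v)"
    unfolding C_def using r v by (intro connected_on_component) auto
  ultimately show thesis using that[of v] v by simp
qed

section \<open>Blocks\<close>

lemma nonseparable_clique: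
  assumes K: "is_clique E K" and card_K: "2 \<le> card K"
  shows "nonseparable E K"
proof -
  have "connected_on E (K - {v})" for v
  proof -
    obtain c where "c \<in> K - {v}"
      using Diff_singleton_nonempty_if_card_ge_2[OF card_K] by blast
    moreover have "is_clique E (K - {v})"
      using K by (auto simp: is_clique_def)
    ultimately show ?thesis by (rule connected_on_clique[rotated])
  qed
  moreover obtain c where "c \<in> K"
    using Diff_singleton_nonempty_if_card_ge_2[OF card_K] by blast
  then have "connected_on E K" by (rule connected_on_clique[OF K])
  ultimately show ?thesis using card_K unfolding nonseparable_def by blast
qed

lemma nonseparable_Un:
  assumes X: "nonseparable E X" and Y: "nonseparable E Y"
    and "finite (X \<union> Y)" and XY: "2 \<le> card (X \<inter> Y)"
  shows "nonseparable E (X \<union> Y)"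
proof -
  have conn_Diff: "connected_on E (Z - {w})" if "nonseparable E Z" for Z w
    using that unfolding nonseparable_def by (cases "w \<in> Z") auto
  have "connected_on E (X \<union> Y - {w})" for w
  proof -
    obtain c where "c \<in> X \<inter> Y - {w}"
      using Diff_singleton_nonempty_if_card_ge_2[OF XY] by blast
    then have "connected_on E ((X - {w}) \<union> (Y - {w}))"
      using conn_Diff[OF X] conn_Diff[OF Y] by (intro connected_on_Un[of _ _ _ c]) auto
    then show ?thesis by (simp add: Un_Diff)
  qed
  moreover have "connected_on E (X \<union> Y)"
  proof -
    obtain c where "c \<in> X \<inter> Y" using Diff_singleton_nonempty_if_card_ge_2[OF XY] by blast
    moreover have "connected_on E X" "connected_on E Y"
      using X Y unfolding nonseparable_def by blast+
    ultimately show ?thesis using connected_on_Un[of E X Y c] by blast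
  qed
  moreover have "card (X \<inter> Y) \<le> card (X \<union> Y)"
    using \<open>finite (X \<union> Y)\<close> by (intro card_mono) auto
  ultimately show ?thesis
    using XY unfolding nonseparable_def by simp
qed

lemma graph_edgeD:
  assumes "graph V E" and "{u, v} \<in> E"
  shows "u \<noteq> v" and "u \<in> V" and "v \<in> V"
  using assms unfolding graph_def by (metis doubleton_eq_iff insert_absorb2)+

lemma finite_edges: "graph V E \<Longrightarrow> finite E"
  unfolding graph_def by (rule finite_subset[of _ "Pow V"]) auto

lemma ex_block_superset:
  assumes "finite V" and "W \<subseteq> V" and "nonseparable E W"
  obtains B where "is_block V E B" and "W \<subseteq> B"
proof -
  let ?S = "{W'. W \<subseteq> W' \<and> W' \<subseteq> V \<and> nonseparable E W'}"
  have "finite ?S"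
    by (rule finite_subset[of _ "Pow V"]) (use assms(1) in auto)
  moreover have "W \<in> ?S" using assms by simp
  ultimately obtain B where "B \<in> ?S" and "\<forall>B'\<in>?S. B \<subseteq> B' \<longrightarrow> B = B'"
    using finite_has_maximal2[of ?S W] by meson
  then have "is_block V E B" and "W \<subseteq> B"
    unfolding is_block_def by auto
  then show thesis ..
qed

lemma finite_blocks: "finite V \<Longrightarrow> finite (blocks V E)"
  unfolding blocks_def is_block_def by (rule finite_subset[of _ "Pow V"]) auto

lemma blocksD:
  assumes "W \<in> blocks V E"
  shows "W \<subseteq> V" and "nonseparable E W" and "2 \<le> card W"
    and "\<And>W'. W \<subseteq> W' \<Longrightarrow> W' \<subseteq> V \<Longrightarrow> nonseparable E W' \<Longrightarrow> W' = W"
  using assms unfolding blocks_def is_block_def nonseparable_def by blast+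

lemma card_Int_blocks_le_1:
  assumes "finite V" and W1: "W1 \<in> blocks V E" and W2: "W2 \<in> blocks V E" and "W1 \<noteq> W2"
  shows "card (W1 \<inter> W2) \<le> 1"
proof (rule ccontr)
  assume "\<not> ?thesis"
  moreover have "finite (W1 \<union> W2)"
    using assms(1) blocksD(1)[OF W1] blocksD(1)[OF W2] by (simp add: finite_subset)
  ultimately have "nonseparable E (W1 \<union> W2)"
    using nonseparable_Un[OF blocksD(2)[OF W1] blocksD(2)[OF W2]] by simp
  moreover have "W1 \<union> W2 \<subseteq> V"
    using blocksD(1)[OF W1] blocksD(1)[OF W2] by simp
  ultimately have "W1 \<union> W2 = W1" and "W1 \<union> W2 = W2"
    using blocksD(4)[OF W1, of "W1 \<union> W2"] blocksD(4)[OF W2, of "W1 \<union> W2"] by auto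
  with \<open>W1 \<noteq> W2\<close> show False by simp
qed

lemma edge_in_block:
  assumes "graph V E" and "e \<in> E"
  obtains W where "W \<in> blocks V E" and "e \<subseteq> W"
proof -
  obtain u v where e: "e = {u, v}" and "u \<noteq> v" "u \<in> V" "v \<in> V"
    using assms unfolding graph_def by blast
  moreover have "is_clique E {u, v}"
    using assms(2) e by (auto simp: is_clique_def insert_commute)
  ultimately have "nonseparable E e"
    by (simp add: nonseparable_clique)
  moreover have "finite V" using assms(1) by (simp add: graph_def)
  ultimately show thesis
    using that ex_block_superset[of V e E] e \<open>u \<in> V\<close> \<open>v \<in> V\<close> by (auto simp: blocks_def)
qed

section \<open>Block graphs\<close>

definition nonseparable_cliques :: "'a set set \<Rightarrow> 'a set \<Rightarrow> bool" where
  "nonseparable_cliques E V \<longleftrightarrow> (\<forall>W\<subseteq>V. nonseparable E W \<longrightarrow> is_clique E W)"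

lemma block_graph_nonseparable_cliques:
  assumes "block_graph V E"
  shows "nonseparable_cliques E V"
  unfolding nonseparable_cliques_def
proof (intro allI impI)
  fix W assume "W \<subseteq> V" "nonseparable E W"
  moreover have "finite V" using assms by (simp add: block_graph_def graph_def)
  ultimately obtain B where "is_block V E B" and "W \<subseteq> B"
    using ex_block_superset by blast
  moreover have "is_clique E B"
    using assms \<open>is_block V E B\<close> by (simp add: block_graph_def blocks_def)
  ultimately show "is_clique E W" by (auto simp: is_clique_def)
qed

lemma nonseparable_cliques_subset:
  "nonseparable_cliques E V \<Longrightarrow> U \<subseteq> V \<Longrightarrow> nonseparable_cliques E U"
  unfolding nonseparable_cliques_def by blast

lemma minimal_connected_reach_ends:
  assumes R: "connected_on E R" and "a \<in> R" and "b \<in> R"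
    and minimal: "\<And>R'. R' \<subseteq> R \<Longrightarrow> a \<in> R' \<Longrightarrow> b \<in> R' \<Longrightarrow> connected_on E R' \<Longrightarrow> R' = R"
    and "w \<in> R" and y: "y \<in> R - {w}"
  shows "\<exists>t\<in>{a, b} - {w}. reach E (R - {w}) y t"
proof (rule ccontr)
  assume none: "\<not> ?thesis"
  define K where "K = component E (R - {w}) y"
  have "a \<notin> K" and "b \<notin> K"
    using none by (auto simp: K_def component_def)
  have "y \<in> K" and "w \<notin> K"
    using y by (auto simp: K_def component_def)
  have attach: "u \<in> K \<or> u = w" if "k \<in> K" "u \<in> R" "{k, u} \<in> E" for k u
  proof (cases "u = w")
    case False
    have "reach E (R - {w}) y k" "k \<in> R - {w}"
      using \<open>k \<in> K\<close> by (simp_all add: K_def component_def)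
    then have "reach E (R - {w}) y u"
      using reach_step[of E "R - {w}" y k u] that False by blast
    then show ?thesis using that False by (simp add: K_def component_def)
  qed simp
  have "connected_on E (R - K)"
  proof (rule connected_onI_center)
    show "w \<in> R - K" using \<open>w \<in> R\<close> \<open>w \<notin> K\<close> by blast
    fix z assume z: "z \<in> R - K"
    have "reach E R z w" using R z \<open>w \<in> R\<close> unfolding connected_on_iff_reach by blast
    then show "reach E (R - K) z w"
      using reach_avoid z \<open>w \<notin> K\<close> attach by metis
  qed
  then have "R - K = R"
    using minimal \<open>a \<in> R\<close> \<open>b \<in> R\<close> \<open>a \<notin> K\<close> \<open>b \<notin> K\<close> by blast
  with \<open>y \<in> K\<close> y show False by blast
qed

lemma nonseparable_insert_common_neighbour:
  assumes "finite R" and R: "connected_on E R" and "a \<in> R" and "b \<in> R"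
    and minimal: "\<And>R'. R' \<subseteq> R \<Longrightarrow> a \<in> R' \<Longrightarrow> b \<in> R' \<Longrightarrow> connected_on E R' \<Longrightarrow> R' = R"
    and "x \<notin> R" and xa: "{x, a} \<in> E" and xb: "{x, b} \<in> E"
  shows "nonseparable E (insert x R)"
proof -
  have "connected_on E {x, a}"
    using xa by (intro connected_on_clique[of _ _ x]) (auto simp: is_clique_def insert_commute)
  then have "connected_on E (insert x R)"
    using connected_on_Un[of E "{x, a}" R a] R \<open>a \<in> R\<close> by (simp add: insert_absorb)
  moreover have "connected_on E (insert x R - {w})" if w: "w \<in> R" for w
  proof (rule connected_onI_center)
    show "x \<in> insert x R - {w}" using w \<open>x \<notin> R\<close> by auto
    fix u assume u: "u \<in> insert x R - {w}"
    show "reach E (insert x R - {w}) u x"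
    proof (cases "u = x")
      case False
      then have "u \<in> R - {w}" using u by simp
      then obtain t where t: "t \<in> {a, b} - {w}" "reach E (R - {w}) u t"
        using minimal_connected_reach_ends[OF R \<open>a \<in> R\<close> \<open>b \<in> R\<close> minimal w] by blast
      have "reach E (insert x R - {w}) u t"
        using t(2) by (rule reach_mono) blast
      moreover have "t \<in> insert x R - {w}" "x \<in> insert x R - {w}" "{t, x} \<in> E"
        using t(1) \<open>a \<in> R\<close> \<open>b \<in> R\<close> \<open>x \<notin> R\<close> w xa xb by (auto simp: insert_commute)
      ultimately show ?thesis using reach_step[of E "insert x R - {w}" u t x] by blast
    qed simp
  qed
  moreover have "insert x R - {x} = R" using \<open>x \<notin> R\<close> by simp
  moreover have "2 \<le> card (insert x R)"
    using \<open>finite R\<close> \<open>a \<in> R\<close> \<open>x \<notin> R\<close> by (auto simp: Suc_le_eq card_gt_0_iff)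
  ultimately show ?thesis using R unfolding nonseparable_def by auto
qed

text \<open>A \<open>\<subseteq>\<close>-minimal connected \<open>R \<subseteq> V - {x}\<close> containing \<open>a\<close> and \<open>b\<close> is in effect an
  \<open>a\<close>-\<open>b\<close> path, so \<open>insert x R\<close> is a cycle; being nonseparable, it is a clique.\<close>

lemma nonseparable_cliques_common_neighbour:
  assumes cliques: "nonseparable_cliques E V" and "finite V" and "x \<in> V"
    and a: "a \<in> V - {x}" and b: "b \<in> V - {x}" and "a \<noteq> b"
    and xa: "{x, a} \<in> E" and xb: "{x, b} \<in> E" and ab: "reach E (V - {x}) a b"
  shows "{a, b} \<in> E"
proof -
  define RR where "RR = {R. R \<subseteq> V - {x} \<and> a \<in> R \<and> b \<in> R \<and> connected_on E R}"
  have "component E (V - {x}) a \<in> RR"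
    using a b ab connected_on_component[OF a] by (auto simp: RR_def component_def)
  then have "RR \<noteq> {}" by blast
  moreover have "finite RR"
    by (rule finite_subset[of _ "Pow V"]) (use \<open>finite V\<close> in \<open>auto simp: RR_def\<close>)
  ultimately obtain R where "R \<in> RR" and R_min: "\<forall>R'\<in>RR. R' \<subseteq> R \<longrightarrow> R = R'"
    using finite_has_minimal[of RR] by blast
  then have R: "R \<subseteq> V - {x}" "a \<in> R" "b \<in> R" "connected_on E R"
    by (simp_all add: RR_def)
  have "finite R" using R(1) \<open>finite V\<close> by (simp add: finite_subset)
  have "nonseparable E (insert x R)"
  proof (rule nonseparable_insert_common_neighbour[OF \<open>finite R\<close> R(4) R(2) R(3) _ _ xa xb])
    show "R' = R" if "R' \<subseteq> R" "a \<in> R'" "b \<in> R'" "connected_on E R'" for R'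
    proof -
      have "R' \<in> RR" using that R(1) unfolding RR_def by blast
      with R_min that(1) show ?thesis by blast
    qed
    show "x \<notin> R" using R(1) by blast
  qed
  moreover have "insert x R \<subseteq> V" using R(1) \<open>x \<in> V\<close> by blast
  ultimately have "is_clique E (insert x R)"
    using cliques unfolding nonseparable_cliques_def by blast
  then show ?thesis using R(2,3) \<open>a \<noteq> b\<close> unfolding is_clique_def by blast
qed

definition indep_set :: "'a set set \<Rightarrow> 'a set \<Rightarrow> bool" where
  "indep_set E I \<longleftrightarrow> (\<forall>u\<in>I. \<forall>w\<in>I. u \<noteq> w \<longrightarrow> {u, w} \<notin> E)"

definition max_clique :: "'a set set \<Rightarrow> 'a set \<Rightarrow> 'a set \<Rightarrow> bool" where
  "max_clique E V K \<longleftrightarrow> K \<subseteq> V \<and> is_clique E K \<and>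
     (\<forall>K'. K \<subseteq> K' \<and> K' \<subseteq> V \<and> is_clique E K' \<longrightarrow> K' = K)"

lemma block_max_clique:
  assumes "finite V" and W: "W \<in> blocks V E" and "is_clique E W"
  shows "max_clique E V W"
  unfolding max_clique_def
proof (intro conjI allI impI)
  show "W \<subseteq> V" by (rule blocksD(1)[OF W])
  show "is_clique E W" by fact
  fix K assume K: "W \<subseteq> K \<and> K \<subseteq> V \<and> is_clique E K"
  then have "card W \<le> card K"
    using \<open>finite V\<close> by (meson card_mono finite_subset)
  then have "nonseparable E K"
    using K blocksD(3)[OF W] nonseparable_clique[of E K] by simp
  then show "K = W" using K blocksD(4)[OF W] by blast
qed

lemma max_clique_containing_non_cut_vertex:
  assumes cliques: "nonseparable_cliques E V" and "finite V" and "v \<in> V"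
    and conn: "connected_on E (V - {v})" and K: "max_clique E V K" and "v \<in> K"
  shows "K = insert v {u \<in> V. u \<noteq> v \<and> {u, v} \<in> E}"
proof -
  let ?N = "{u \<in> V. u \<noteq> v \<and> {u, v} \<in> E}"
  have "{p, q} \<in> E" if "p \<in> ?N" "q \<in> ?N" "p \<noteq> q" for p q
  proof (rule nonseparable_cliques_common_neighbour[OF cliques \<open>finite V\<close> \<open>v \<in> V\<close>])
    show "reach E (V - {v}) p q"
      using conn that unfolding connected_on_iff_reach by blast
  qed (use that in \<open>auto simp: insert_commute\<close>)
  then have "is_clique E (insert v ?N)"
    unfolding is_clique_def by (auto simp: insert_commute)
  moreover have "K \<subseteq> insert v ?N"
    using K \<open>v \<in> K\<close> unfolding max_clique_def is_clique_def by (auto simp: insert_commute)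
  moreover have "insert v ?N \<subseteq> V" using \<open>v \<in> V\<close> by blast
  ultimately show ?thesis using K unfolding max_clique_def by blast
qed

lemma indep_set_meeting_max_cliques_extend:
  assumes cliques: "nonseparable_cliques E V" and "finite V" and "v \<in> V"
    and conn: "connected_on E (V - {v})" and I: "I \<subseteq> V - {v}" "indep_set E I"
    and I_meets: "\<And>K. max_clique E (V - {v}) K \<Longrightarrow> 2 \<le> card K \<Longrightarrow> K \<inter> I \<noteq> {}"
  shows "\<exists>I'\<subseteq>V. indep_set E I' \<and> (\<forall>K. max_clique E V K \<and> 2 \<le> card K \<longrightarrow> K \<inter> I' \<noteq> {})"
proof -
  define N where "N = {u \<in> V. u \<noteq> v \<and> {u, v} \<in> E}"
  have through_v: "K = insert v N" if "max_clique E V K" "v \<in> K" for K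
    unfolding N_def using max_clique_containing_non_cut_vertex[OF cliques \<open>finite V\<close> \<open>v \<in> V\<close> conn that] .
  have avoiding_v: "K \<inter> I \<noteq> {}" if "max_clique E V K" "2 \<le> card K" "v \<notin> K" for K
    using that I_meets[of K] unfolding max_clique_def by blast
  show ?thesis
  proof (cases "I \<inter> N = {}")
    case True
    then have "indep_set E (insert v I)"
      using I unfolding indep_set_def N_def by (auto simp: insert_commute)
    moreover have "insert v I \<subseteq> V" using I(1) \<open>v \<in> V\<close> by blast
    moreover have "K \<inter> insert v I \<noteq> {}" if "max_clique E V K" "2 \<le> card K" for K
      using avoiding_v[OF that] by (cases "v \<in> K") auto
    ultimately show ?thesis by blast
  next
    case False
    then have "K \<inter> I \<noteq> {}" if "max_clique E V K" "2 \<le> card K" for K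
      using that through_v avoiding_v by (cases "v \<in> K") auto
    then show ?thesis using I by blast
  qed
qed

lemma ex_indep_set_meeting_max_cliques:
  assumes "finite V" and "connected_on E V" and "nonseparable_cliques E V"
  shows "\<exists>I\<subseteq>V. indep_set E I \<and> (\<forall>K. max_clique E V K \<and> 2 \<le> card K \<longrightarrow> K \<inter> I \<noteq> {})"
  using assms
proof (induction "card V" arbitrary: V rule: less_induct)
  case less
  show ?case
  proof (cases "2 \<le> card V")
    case False
    have "\<not> (max_clique E V K \<and> 2 \<le> card K)" for K
      using False card_mono[OF \<open>finite V\<close>, of K] unfolding max_clique_def by auto
    then show ?thesis by (auto simp: indep_set_def)
  next
    case True
    obtain v where "v \<in> V" and conn: "connected_on E (V - {v})"
      using ex_non_cut_vertex[OF less.prems(1,2) True] by blast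
    have "card (V - {v}) < card V"
      using \<open>v \<in> V\<close> less.prems(1) by (rule card_Diff1_less[rotated])
    moreover have "nonseparable_cliques E (V - {v})"
      using less.prems(3) by (rule nonseparable_cliques_subset) blast
    ultimately obtain I where "I \<subseteq> V - {v}" "indep_set E I"
      and "\<And>K. max_clique E (V - {v}) K \<Longrightarrow> 2 \<le> card K \<Longrightarrow> K \<inter> I \<noteq> {}"
      using less.hyps[of "V - {v}"] less.prems(1) conn by auto
    then show ?thesis
      using indep_set_meeting_max_cliques_extend[OF less.prems(3,1) \<open>v \<in> V\<close> conn] by blast
  qed
qed

section \<open>Sumsets and weak IASIs\<close>

lemma sumset_commute: "sumset A B = sumset B A"
  unfolding sumset_def using add.commute by blast

lemma sumset_singleton: "sumset {p} B = (+) p ` B"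
  unfolding sumset_def by auto

lemma card_sumset_singleton: "card (sumset {p} B) = card B"
  by (simp add: sumset_singleton card_image)

lemma finite_sumset: "finite A \<Longrightarrow> finite B \<Longrightarrow> finite (sumset A B)"
proof -
  have "sumset A B = (\<lambda>(a, b). a + b) ` (A \<times> B)"
    unfolding sumset_def by auto
  then show "finite A \<Longrightarrow> finite B \<Longrightarrow> finite (sumset A B)" by simp
qed

lemma sumset_empty_iff: "sumset A B = {} \<longleftrightarrow> A = {} \<or> B = {}"
  unfolding sumset_def by auto

lemma Min_sumset:
  assumes "finite A" "finite B" "A \<noteq> {}" "B \<noteq> {}"
  shows "Min (sumset A B) = Min A + Min B"
proof (rule Min_eqI)
  show "finite (sumset A B)" using assms by (simp add: finite_sumset)
  show "Min A + Min B \<le> y" if "y \<in> sumset A B" for y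
    using that assms unfolding sumset_def by (auto intro: add_mono)
  have "Min A \<in> A" "Min B \<in> B" using assms by simp_all
  then show "Min A + Min B \<in> sumset A B"
    unfolding sumset_def by blast
qed

text \<open>The translates \<open>A + min B\<close> and \<open>max A + B\<close> lie in \<open>A + B\<close> and meet only in
  \<open>max A + min B\<close>.\<close>

lemma card_sumset_ge:
  assumes "finite A" "finite B" "A \<noteq> {}" "B \<noteq> {}"
  shows "card A + card B \<le> card (sumset A B) + 1"
proof -
  let ?L = "(\<lambda>a. a + Min B) ` A" and ?R = "(+) (Max A) ` B"
  have "card ?L = card A" "card ?R = card B"
    by (simp_all add: card_image)
  moreover have "?L \<inter> ?R \<subseteq> {Max A + Min B}"
  proof
    fix z assume "z \<in> ?L \<inter> ?R"
    then obtain a b where "a \<in> A" "b \<in> B" "z = a + Min B" "z = Max A + b" by blast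
    moreover have "a \<le> Max A" "Min B \<le> b" using calculation assms by simp_all
    ultimately show "z \<in> {Max A + Min B}" by simp
  qed
  then have "card (?L \<inter> ?R) \<le> 1"
    using card_mono[of "{Max A + Min B}"] by fastforce
  moreover have "card ?L + card ?R = card (?L \<union> ?R) + card (?L \<inter> ?R)"
    using assms by (intro card_Un_Int) auto
  moreover have "Max A \<in> A" "Min B \<in> B" using assms by simp_all
  then have "?L \<union> ?R \<subseteq> sumset A B"
    unfolding sumset_def by blast
  then have "card (?L \<union> ?R) \<le> card (sumset A B)"
    using assms by (intro card_mono) (simp_all add: finite_sumset)
  ultimately show ?thesis by linarith
qed

lemma weak_iasi_edge_singleton:
  assumes f: "weak_iasi V E f" and "u \<in> V" "v \<in> V" "u \<noteq> v" and "{u, v} \<in> E"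
  shows "card (f u) = 1 \<or> card (f v) = 1"
proof (rule ccontr)
  assume not_single: "\<not> ?thesis"
  have fin: "finite (f u)" "finite (f v)" and "f u \<noteq> f v"
    using assms unfolding weak_iasi_def iasi_def inj_on_def by blast+
  have card_eq: "card (sumset (f u) (f v)) = max (card (f u)) (card (f v))"
    using assms unfolding weak_iasi_def by blast
  show False
  proof (cases "f u = {} \<or> f v = {}")
    case True
    then have "sumset (f u) (f v) = {}" by (simp add: sumset_empty_iff)
    then have "f u = {}" "f v = {}"
      using card_eq fin by auto
    with \<open>f u \<noteq> f v\<close> show False by simp
  next
    case False
    then have "card (f u) \<noteq> 0" "card (f v) \<noteq> 0" using fin by simp_all
    then have "2 \<le> card (f u)" "2 \<le> card (f v)" using not_single by simp_all
    moreover have "card (f u) + card (f v) \<le> card (sumset (f u) (f v)) + 1"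
      using card_sumset_ge fin False by blast
    ultimately show False using card_eq by linarith
  qed
qed

lemma weak_iasi_mono_indexed_edge:
  assumes "weak_iasi V E f" and "e \<in> mono_indexed_edges E f" and "u \<in> e"
  shows "card (f u) \<le> 1"
proof -
  obtain p q where "e \<in> E" "e = {p, q}" "card (sumset (f p) (f q)) = 1"
    using assms(2) unfolding mono_indexed_edges_def by blast
  moreover have "card (sumset (f p) (f q)) = max (card (f p)) (card (f q))"
    using assms(1) calculation unfolding weak_iasi_def by blast
  ultimately show ?thesis using \<open>u \<in> e\<close> by auto
qed

lemma sum_two_powers_eqD:
  fixes a b c d :: nat
  assumes "a \<noteq> b" "c \<noteq> d" "(2::nat) ^ a + 2 ^ b = 2 ^ c + 2 ^ d"
  shows "{a, b} = {c, d}"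
proof -
  have "{n. bit ((2::nat) ^ x + 2 ^ y) n} = {x, y}" if "x \<noteq> y" for x y
  proof -
    have "(2::nat) ^ x + 2 ^ y = or (2 ^ x) (2 ^ y)"
      using that by (intro disjunctive_add) (auto simp: bit_exp_iff)
    then show ?thesis by (auto simp: bit_or_iff bit_exp_iff)
  qed
  with assms show ?thesis by metis
qed

definition pow2_label :: "'a set \<Rightarrow> ('a \<Rightarrow> nat) \<Rightarrow> 'a \<Rightarrow> nat set" where
  "pow2_label I g v = (if v \<in> I then {2 ^ g v, 2 ^ Suc (g v)} else {2 ^ g v})"

lemma finite_pow2_label: "finite (pow2_label I g v)"
  by (simp add: pow2_label_def)

lemma pow2_label_nonempty: "pow2_label I g v \<noteq> {}"
  by (simp add: pow2_label_def)

lemma card_pow2_label: "card (pow2_label I g v) = (if v \<in> I then 2 else 1)"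
  by (simp add: pow2_label_def)

lemma Min_pow2_label: "Min (pow2_label I g v) = 2 ^ g v"
  by (simp add: pow2_label_def)

lemma weak_iasi_pow2_label:
  assumes gr: "graph V E" and I: "indep_set E I" and g: "inj_on g V"
  shows "weak_iasi V E (pow2_label I g)"
proof -
  let ?f = "pow2_label I g"
  have Min_edge: "Min (sumset (?f u) (?f v)) = 2 ^ g u + 2 ^ g v" for u v
    by (simp add: Min_sumset finite_pow2_label pow2_label_nonempty Min_pow2_label)
  have "inj_on ?f V"
  proof (rule inj_onI)
    fix u v assume "u \<in> V" "v \<in> V" "?f u = ?f v"
    then have "g u = g v" using Min_pow2_label[of I g u] Min_pow2_label[of I g v] by simp
    then show "u = v" using inj_onD[OF g _ \<open>u \<in> V\<close> \<open>v \<in> V\<close>] by blast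
  qed
  moreover have "{u, v} = {x, y}"
    if "{u, v} \<in> E" "{x, y} \<in> E" "sumset (?f u) (?f v) = sumset (?f x) (?f y)" for u v x y
  proof -
    have "2 ^ g u + 2 ^ g v = (2::nat) ^ g x + 2 ^ g y"
      using Min_edge that(3) by metis
    moreover have "g u \<noteq> g v" "g x \<noteq> g y" "{u, v} \<subseteq> V" "{x, y} \<subseteq> V"
      using graph_edgeD[OF gr that(1)] graph_edgeD[OF gr that(2)] g by (auto dest: inj_onD)
    ultimately have "g ` {u, v} = g ` {x, y}"
      using sum_two_powers_eqD[of "g u" "g v" "g x" "g y"] by simp
    then show ?thesis using inj_on_image_eq_iff[OF g \<open>{u, v} \<subseteq> V\<close> \<open>{x, y} \<subseteq> V\<close>] by blast
  qed
  moreover have "card (sumset (?f u) (?f v)) = max (card (?f u)) (card (?f v))"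
    if "{u, v} \<in> E" for u v
  proof -
    have single: "card (sumset (?f w) (?f z)) = max (card (?f w)) (card (?f z))" if "w \<notin> I" for w z
      using that by (simp add: pow2_label_def card_sumset_singleton)
    have "u \<notin> I \<or> v \<notin> I"
      using I that graph_edgeD(1)[OF gr that] unfolding indep_set_def by blast
    then show ?thesis
      using single[of u v] single[of v u] sumset_commute[of "?f u" "?f v"] by (auto simp: max.commute)
  qed
  ultimately show ?thesis
    unfolding weak_iasi_def iasi_def by (simp add: finite_pow2_label)
qed

lemma mono_indexed_edges_pow2_label:
  assumes "weak_iasi V E (pow2_label I g)"
  shows "mono_indexed_edges E (pow2_label I g) \<subseteq> {e \<in> E. e \<inter> I = {}}"
  using weak_iasi_mono_indexed_edge[OF assms]
  by (fastforce simp: card_pow2_label mono_indexed_edges_def)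

section \<open>Counting mono-indexed edges\<close>

definition pairs_in :: "'a set \<Rightarrow> 'a set set" where
  "pairs_in A = {e. e \<subseteq> A \<and> card e = 2}"

lemma card_pairs_in: "finite A \<Longrightarrow> card (pairs_in A) = card A choose 2"
  unfolding pairs_in_def by (rule n_subsets)

lemma finite_pairs_in: "finite A \<Longrightarrow> finite (pairs_in A)"
  unfolding pairs_in_def by (rule finite_subset[of _ "Pow A"]) auto

lemma card_singleton_labelled_ge:
  assumes f: "weak_iasi V E f" and "W \<subseteq> V" and "finite W" and W: "is_clique E W"
  shows "card W - 1 \<le> card {u \<in> W. card (f u) = 1}"
proof -
  let ?S = "{u \<in> W. card (f u) = 1}"
  have "\<forall>x\<in>W - ?S. \<forall>y\<in>W - ?S. x = y"
  proof (intro ballI, rule ccontr)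
    fix x y assume "x \<in> W - ?S" "y \<in> W - ?S" "x \<noteq> y"
    moreover have "{x, y} \<in> E" using W calculation unfolding is_clique_def by blast
    ultimately show False
      using weak_iasi_edge_singleton[OF f, of x y] \<open>W \<subseteq> V\<close> by auto
  qed
  then have "card (W - ?S) \<le> 1"
    using card_le_Suc0_iff_eq[of "W - ?S"] \<open>finite W\<close> by simp
  moreover have "card (W - ?S) = card W - card ?S"
    using \<open>finite W\<close> by (intro card_Diff_subset) auto
  ultimately show ?thesis by linarith
qed

lemma pairs_in_mono: "A \<subseteq> B \<Longrightarrow> pairs_in A \<subseteq> pairs_in B"
  unfolding pairs_in_def by blast

lemma pairs_in_disjoint:
  assumes "finite (A \<inter> B)" and "card (A \<inter> B) \<le> 1"
  shows "pairs_in A \<inter> pairs_in B = {}"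
proof -
  have "e \<notin> pairs_in B" if "e \<in> pairs_in A" for e
  proof
    assume "e \<in> pairs_in B"
    with that have "e \<subseteq> A \<inter> B" and "card e = 2" unfolding pairs_in_def by auto
    moreover have "card e \<le> card (A \<inter> B)"
      using assms(1) \<open>e \<subseteq> A \<inter> B\<close> by (rule card_mono)
    ultimately show False using assms(2) by simp
  qed
  then show ?thesis by blast
qed

lemma pairs_in_singleton_labelled_mono_indexed:
  assumes "is_clique E W"
  shows "pairs_in {u \<in> W. card (f u) = 1} \<subseteq> mono_indexed_edges E f"
proof
  fix e assume "e \<in> pairs_in {u \<in> W. card (f u) = 1}"
  then obtain u v where e: "e = {u, v}" "u \<noteq> v" "u \<in> W" "v \<in> W"
    and "card (f u) = 1" "card (f v) = 1"
    unfolding pairs_in_def by (auto simp: card_2_iff)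
  then have "card (sumset (f u) (f v)) = 1"
    by (auto simp: card_1_singleton_iff sumset_singleton)
  moreover have "e \<in> E" using assms e unfolding is_clique_def by blast
  ultimately show "e \<in> mono_indexed_edges E f"
    unfolding mono_indexed_edges_def using e(1) by blast
qed

lemma sum_choose_le_card_mono_indexed_edges:
  assumes f: "weak_iasi V E f" and "finite E" and "finite \<W>"
    and W_sub: "\<And>W. W \<in> \<W> \<Longrightarrow> W \<subseteq> V" and W_fin: "\<And>W. W \<in> \<W> \<Longrightarrow> finite W"
    and W_clique: "\<And>W. W \<in> \<W> \<Longrightarrow> is_clique E W"
    and W_Int: "\<And>W W'. W \<in> \<W> \<Longrightarrow> W' \<in> \<W> \<Longrightarrow> W \<noteq> W' \<Longrightarrow> card (W \<inter> W') \<le> 1"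
  shows "(\<Sum>W\<in>\<W>. (card W - 1) choose 2) \<le> card (mono_indexed_edges E f)"
proof -
  define P where "P W = pairs_in {u \<in> W. card (f u) = 1}" for W
  have "(\<Sum>W\<in>\<W>. (card W - 1) choose 2) \<le> (\<Sum>W\<in>\<W>. card (P W))"
  proof (rule sum_mono)
    fix W assume W: "W \<in> \<W>"
    have "card W - 1 \<le> card {u \<in> W. card (f u) = 1}"
      by (rule card_singleton_labelled_ge[OF f W_sub[OF W] W_fin[OF W] W_clique[OF W]])
    then show "(card W - 1) choose 2 \<le> card (P W)"
      using W_fin[OF W] by (simp add: P_def card_pairs_in binomial_right_mono)
  qed
  also have "\<dots> = card (\<Union>W\<in>\<W>. P W)"
  proof -
    have "finite (P W)" if "W \<in> \<W>" for W
      using W_fin[OF that] by (simp add: P_def finite_pairs_in)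
    moreover have "P W \<inter> P W' = {}" if "W \<in> \<W>" "W' \<in> \<W>" "W \<noteq> W'" for W W'
    proof -
      have "pairs_in W \<inter> pairs_in W' = {}"
        using W_fin[OF that(1)] W_Int[OF that] by (intro pairs_in_disjoint) simp_all
      moreover have "P W \<subseteq> pairs_in W" "P W' \<subseteq> pairs_in W'"
        unfolding P_def by (auto intro!: pairs_in_mono)
      ultimately show ?thesis by blast
    qed
    ultimately show ?thesis using \<open>finite \<W>\<close> by (intro card_UN_disjoint[symmetric]) auto
  qed
  also have "\<dots> \<le> card (mono_indexed_edges E f)"
  proof (rule card_mono)
    show "finite (mono_indexed_edges E f)"
      using \<open>finite E\<close> unfolding mono_indexed_edges_def by simp
    show "(\<Union>W\<in>\<W>. P W) \<subseteq> mono_indexed_edges E f"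
      unfolding P_def using pairs_in_singleton_labelled_mono_indexed[OF W_clique] by blast
  qed
  finally show ?thesis .
qed

lemma card_edges_avoiding_le:
  assumes gr: "graph V E" and "finite \<W>" and W_fin: "\<And>W. W \<in> \<W> \<Longrightarrow> finite W"
    and cover: "\<And>e. e \<in> E \<Longrightarrow> \<exists>W\<in>\<W>. e \<subseteq> W"
    and meets: "\<And>W. W \<in> \<W> \<Longrightarrow> W \<inter> I \<noteq> {}"
  shows "card {e \<in> E. e \<inter> I = {}} \<le> (\<Sum>W\<in>\<W>. (card W - 1) choose 2)"
proof -
  have "{e \<in> E. e \<inter> I = {}} \<subseteq> (\<Union>W\<in>\<W>. pairs_in (W - I))"
  proof
    fix e assume e: "e \<in> {e \<in> E. e \<inter> I = {}}"
    then obtain W where "W \<in> \<W>" "e \<subseteq> W" using cover by blast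
    moreover have "card e = 2"
      using gr e unfolding graph_def by auto
    ultimately show "e \<in> (\<Union>W\<in>\<W>. pairs_in (W - I))"
      using e unfolding pairs_in_def by blast
  qed
  then have "card {e \<in> E. e \<inter> I = {}} \<le> card (\<Union>W\<in>\<W>. pairs_in (W - I))"
    using \<open>finite \<W>\<close> W_fin by (intro card_mono) (auto simp: finite_pairs_in)
  also have "\<dots> \<le> (\<Sum>W\<in>\<W>. card (pairs_in (W - I)))"
    by (rule card_UN_le[OF \<open>finite \<W>\<close>])
  also have "\<dots> \<le> (\<Sum>W\<in>\<W>. (card W - 1) choose 2)"
  proof (rule sum_mono)
    fix W assume W: "W \<in> \<W>"
    have "card (W - I) < card W"
      using meets[OF W] W_fin[OF W] by (intro psubset_card_mono) auto
    then show "card (pairs_in (W - I)) \<le> (card W - 1) choose 2"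
      using W_fin[OF W] by (simp add: card_pairs_in binomial_right_mono)
  qed
  finally show ?thesis .
qed

section \<open>The sparing number of a block graph\<close>

lemma sparing_number_eqI:
  assumes "weak_iasi V E f" and "card (mono_indexed_edges E f) \<le> n"
    and "\<And>f. weak_iasi V E f \<Longrightarrow> n \<le> card (mono_indexed_edges E f)"
  shows "sparing_number V E = n"
  unfolding sparing_number_def
proof (rule Least_equality)
  show "\<exists>f. weak_iasi V E f \<and> card (mono_indexed_edges E f) = n"
    using assms by (meson le_antisym)
qed (use assms(3) in blast)

lemma real_choose_2_pred:
  assumes "1 \<le> n"
  shows "real ((n - 1) choose 2) = (real n - 1) * (real n - 2) / 2"
proof -
  obtain k where n: "n = Suc k" using assms by (cases n) auto
  have "real (k choose 2) = real k * (real k - 1) / 2"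
    by (cases k) (auto simp: choose_two field_char_0_class.of_nat_div mod_eq_0_iff_dvd algebra_simps)
  then show ?thesis using n by (simp add: algebra_simps)
qed

lemma sum_blocks_choose_le_card_mono_indexed_edges:
  assumes "block_graph V E" and f: "weak_iasi V E f"
  shows "(\<Sum>W\<in>blocks V E. (card W - 1) choose 2) \<le> card (mono_indexed_edges E f)"
proof (rule sum_choose_le_card_mono_indexed_edges[OF f])
  have gr: "graph V E" using assms(1) by (simp add: block_graph_def)
  then have "finite V" by (simp add: graph_def)
  show "finite E" using gr by (rule finite_edges)
  show "finite (blocks V E)" using \<open>finite V\<close> by (rule finite_blocks)
  show "finite W" if "W \<in> blocks V E" for W
    using finite_subset[OF blocksD(1)[OF that] \<open>finite V\<close>] .
  show "is_clique E W" if "W \<in> blocks V E" for W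
    using assms(1) that by (simp add: block_graph_def)
  show "card (W \<inter> W') \<le> 1" if "W \<in> blocks V E" "W' \<in> blocks V E" "W \<noteq> W'" for W W'
    using card_Int_blocks_le_1[OF \<open>finite V\<close> that] .
qed (rule blocksD(1))

lemma ex_weak_iasi_card_mono_indexed_edges_le:
  assumes "block_graph V E"
  obtains f where "weak_iasi V E f"
    and "card (mono_indexed_edges E f) \<le> (\<Sum>W\<in>blocks V E. (card W - 1) choose 2)"
proof -
  have gr: "graph V E" and conn: "connected_on E V"
    and cliques: "\<And>W. W \<in> blocks V E \<Longrightarrow> is_clique E W"
    using assms unfolding block_graph_def by auto
  have "finite V" using gr by (simp add: graph_def)
  obtain I where I: "indep_set E I"
    and meets: "\<And>K. max_clique E V K \<Longrightarrow> 2 \<le> card K \<Longrightarrow> K \<inter> I \<noteq> {}"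
    using ex_indep_set_meeting_max_cliques[OF \<open>finite V\<close> conn block_graph_nonseparable_cliques[OF assms]]
    by blast
  obtain g :: "'a \<Rightarrow> nat" where g: "inj_on g V"
    using finite_imp_inj_to_nat_seg[OF \<open>finite V\<close>] by blast
  have f: "weak_iasi V E (pow2_label I g)"
    by (rule weak_iasi_pow2_label[OF gr I g])
  have "card (mono_indexed_edges E (pow2_label I g)) \<le> card {e \<in> E. e \<inter> I = {}}"
    using mono_indexed_edges_pow2_label[OF f] finite_edges[OF gr] by (intro card_mono) auto
  also have "\<dots> \<le> (\<Sum>W\<in>blocks V E. (card W - 1) choose 2)"
  proof (rule card_edges_avoiding_le[OF gr finite_blocks[OF \<open>finite V\<close>]])
    show "finite W" if "W \<in> blocks V E" for W
      using finite_subset[OF blocksD(1)[OF that] \<open>finite V\<close>] .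
    show "\<exists>W\<in>blocks V E. e \<subseteq> W" if "e \<in> E" for e
      using edge_in_block[OF gr that] by blast
    show "W \<inter> I \<noteq> {}" if "W \<in> blocks V E" for W
      using meets block_max_clique[OF \<open>finite V\<close> that cliques[OF that]] blocksD(3)[OF that] by blast
  qed
  finally show thesis using f that by blast
qed

theorem theorem2p12:
  fixes V :: "'a set" and E :: "'a set set"
  assumes "block_graph V E"
  shows "(\<exists>f. weak_iasi V E f) \<and>
         real (sparing_number V E) =
           (1/2) * (\<Sum>W\<in>blocks V E. (real (card W) - 1) * (real (card W) - 2))"
proof -
  obtain f where f: "weak_iasi V E f"
    and "card (mono_indexed_edges E f) \<le> (\<Sum>W\<in>blocks V E. (card W - 1) choose 2)"
    using ex_weak_iasi_card_mono_indexed_edges_le[OF assms] .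
  then have "sparing_number V E = (\<Sum>W\<in>blocks V E. (card W - 1) choose 2)"
    using sparing_number_eqI sum_blocks_choose_le_card_mono_indexed_edges[OF assms] by blast
  then have "real (sparing_number V E) = (\<Sum>W\<in>blocks V E. real ((card W - 1) choose 2))"
    by simp
  also have "\<dots> = (\<Sum>W\<in>blocks V E. (real (card W) - 1) * (real (card W) - 2) / 2)"
    using blocksD(3) by (intro sum.cong refl real_choose_2_pred) fastforce
  finally show ?thesis using f by (auto simp: sum_divide_distrib)
qed

end
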